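(* Let $G$ be a finite group and let $A$ be a group acting on $G$ by automorphisms, and assume $G$ has an $A$-equivariant IYB-structure. Let $n\ge 1$ and $G^{(n)} = G\times\cdots\times G$ ($n$ factors). Let the wreath product $A\wr \Sigma_n = A^n \rtimes \Sigma_n$ ($\Sigma_n$ the symmetric group on $n$ points) act on $G^{(n)}$ by letting $(a_1,\ldots,a_n)\cdot\sigma$ send $(g_1,\ldots,g_n)$ to $({}^{a_1}g_{\sigma^{-1}(1)},\ldots,{}^{a_n}g_{\sigma^{-1}(n)})$. Then $G^{(n)}$ has an $A\wr\Sigma_n$-equivariant IYB-structure.
   Context: For a group $G$ and a left $\mathbb Z G$-module $M$, a $1$-cocycle is a map $\chi: G \to M$ with $\chi(gh) = \chi(g) + g\chi(h)$ for all $g,h\in G$. A finite group $G$ is called Involutive Yang-Baxter (IYB) if there is a left $\mathbb Z G$-module $M$ and a bijective $1$-cocycle $\chi: G\to M$. If a group $A$ acts on $G$ from the left by automorphisms (written $g\mapsto {}^a g$), an $A$-equivariant IYB-structure on $G$ is a pair $(M,\chi)$ where $M$ is a left $\mathbb Z[G\rtimes A]$-module and $\chi: G\to M$ (with $M$ regarded as a $G$-module by restriction) is a bijective $1$-cocycle satisfying $\chi({}^a g) = a\chi(g)$ for all $a\in A$, $g\in G$. *)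

theory Defs
  imports "HOL-Algebra.Algebra" "HOL-Combinatorics.Permutations"
begin

definition aut_action :: "('a, 'x) monoid_scheme \<Rightarrow> ('g, 'y) monoid_scheme \<Rightarrow> ('a \<Rightarrow> 'g \<Rightarrow> 'g) \<Rightarrow> bool" where
  "aut_action A G phi \<longleftrightarrow>
     (\<forall>a\<in>carrier A. phi a \<in> hom G G) \<and>
     (\<forall>g\<in>carrier G. phi \<one>\<^bsub>A\<^esub> g = g) \<and>
     (\<forall>a\<in>carrier A. \<forall>b\<in>carrier A. \<forall>g\<in>carrier G. phi (a \<otimes>\<^bsub>A\<^esub> b) g = phi a (phi b g))"

definition semidirect :: "('g, 'y) monoid_scheme \<Rightarrow> ('a, 'x) monoid_scheme \<Rightarrow> ('a \<Rightarrow> 'g \<Rightarrow> 'g) \<Rightarrow> ('g \<times> 'a) monoid" where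
  "semidirect G A phi = \<lparr> carrier = carrier G \<times> carrier A,
     monoid.mult = (\<lambda>(g, a) (h, b). (g \<otimes>\<^bsub>G\<^esub> phi a h, a \<otimes>\<^bsub>A\<^esub> b)),
     one = (\<one>\<^bsub>G\<^esub>, \<one>\<^bsub>A\<^esub>) \<rparr>"

text \<open>A left ZH-module: an abelian group M (written multiplicatively, as in HOL-Algebra)
  on which H acts (on the left) by group endomorphisms.\<close>
definition ZG_module :: "('h, 'x) monoid_scheme \<Rightarrow> ('m, 'z) monoid_scheme \<Rightarrow> ('h \<Rightarrow> 'm \<Rightarrow> 'm) \<Rightarrow> bool" where
  "ZG_module H M rho \<longleftrightarrow> comm_group M \<and>
     (\<forall>h\<in>carrier H. rho h \<in> hom M M) \<and>
     (\<forall>m\<in>carrier M. rho \<one>\<^bsub>H\<^esub> m = m) \<and>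
     (\<forall>h\<in>carrier H. \<forall>k\<in>carrier H. \<forall>m\<in>carrier M. rho (h \<otimes>\<^bsub>H\<^esub> k) m = rho h (rho k m))"

definition equivariant_IYB_structure ::
  "('g, 'y) monoid_scheme \<Rightarrow> ('a, 'x) monoid_scheme \<Rightarrow> ('a \<Rightarrow> 'g \<Rightarrow> 'g)
   \<Rightarrow> ('m, 'z) monoid_scheme \<Rightarrow> ('g \<times> 'a \<Rightarrow> 'm \<Rightarrow> 'm) \<Rightarrow> ('g \<Rightarrow> 'm) \<Rightarrow> bool" where
  "equivariant_IYB_structure G A phi M rho chi \<longleftrightarrow>
     ZG_module (semidirect G A phi) M rho \<and>
     bij_betw chi (carrier G) (carrier M) \<and>
     (\<forall>g\<in>carrier G. \<forall>h\<in>carrier G.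
        chi (g \<otimes>\<^bsub>G\<^esub> h) = chi g \<otimes>\<^bsub>M\<^esub> rho (g, \<one>\<^bsub>A\<^esub>) (chi h)) \<and>
     (\<forall>a\<in>carrier A. \<forall>g\<in>carrier G. chi (phi a g) = rho (\<one>\<^bsub>G\<^esub>, a) (chi g))"

definition wreath :: "('a, 'x) monoid_scheme \<Rightarrow> nat \<Rightarrow> ((nat \<Rightarrow> 'a) \<times> (nat \<Rightarrow> nat)) monoid" where
  "wreath A n = \<lparr> carrier = (\<Pi>\<^sub>E i\<in>{1..n}. carrier A) \<times> {s. s permutes {1..n}},
     monoid.mult = (\<lambda>(a, s) (b, t). ((\<lambda>i\<in>{1..n}. a i \<otimes>\<^bsub>A\<^esub> b (Hilbert_Choice.inv s i)), s \<circ> t)),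
     one = ((\<lambda>i\<in>{1..n}. \<one>\<^bsub>A\<^esub>), id) \<rparr>"

definition wreath_action :: "nat \<Rightarrow> ('a \<Rightarrow> 'g \<Rightarrow> 'g) \<Rightarrow> (nat \<Rightarrow> 'a) \<times> (nat \<Rightarrow> nat) \<Rightarrow> (nat \<Rightarrow> 'g) \<Rightarrow> (nat \<Rightarrow> 'g)" where
  "wreath_action n phi = (\<lambda>(a, s) g. (\<lambda>i\<in>{1..n}. phi (a i) (g (Hilbert_Choice.inv s i))))"

end

theory Submission
  imports Defs
begin

text \<open>The structure on \<open>G\<^sup>n\<close> is the \<open>n\<close>-fold power of the given one: the module is \<open>M\<^sup>n\<close>,
  on which \<open>(g, (a, \<sigma>))\<close> acts by permuting the coordinates with \<open>\<sigma>\<close> and then letting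
  \<open>(g\<^sub>i, a\<^sub>i)\<close> act on the \<open>i\<close>-th one, and the cocycle is \<open>\<chi>\<close> applied coordinatewise.
  The cocycle identity, bijectivity and equivariance then hold coordinate by coordinate;
  the only point needing care is that this recipe is an action of \<open>G\<^sup>n \<rtimes> (A \<wr> \<Sigma>\<^sub>n)\<close>,
  which rests on \<open>(\<sigma> \<tau>)\<inverse> = \<tau>\<inverse> \<sigma>\<inverse>\<close>.\<close>

definition wreath_module_action ::
  "nat \<Rightarrow> ('g \<times> 'a \<Rightarrow> 'm \<Rightarrow> 'm) \<Rightarrow> (nat \<Rightarrow> 'g) \<times> (nat \<Rightarrow> 'a) \<times> (nat \<Rightarrow> nat) \<Rightarrow> (nat \<Rightarrow> 'm) \<Rightarrow> nat \<Rightarrow> 'm"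
  where "wreath_module_action n rho =
    (\<lambda>(g, a, s) m. \<lambda>i\<in>{1..n}. rho (g i, a i) (m (Hilbert_Choice.inv s i)))"

lemma comm_group_product_group:
  assumes "\<And>i. i \<in> I \<Longrightarrow> comm_group (G i)"
  shows "comm_group (product_group I G)"
proof (rule group.group_comm_groupI)
  show "group (product_group I G)"
    using assms by (simp add: comm_group.axioms(2))
  show "x \<otimes>\<^bsub>product_group I G\<^esub> y = y \<otimes>\<^bsub>product_group I G\<^esub> x"
    if "x \<in> carrier (product_group I G)" "y \<in> carrier (product_group I G)" for x y
    using that assms by (auto simp: PiE_iff comm_groupE(4) intro!: restrict_ext)
qed

lemma bij_betw_PiE_pointwise:
  assumes "bij_betw f A B"
  shows "bij_betw (\<lambda>x. \<lambda>i\<in>I. f (x i)) (\<Pi>\<^sub>E i\<in>I. A) (\<Pi>\<^sub>E i\<in>I. B)"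
proof (rule bij_betwI[where g = "\<lambda>y. \<lambda>i\<in>I. inv_into A f (y i)"])
  show "(\<lambda>x. \<lambda>i\<in>I. f (x i)) \<in> (\<Pi>\<^sub>E i\<in>I. A) \<rightarrow> (\<Pi>\<^sub>E i\<in>I. B)"
    using assms by (auto simp: bij_betw_def)
  show "(\<lambda>y. \<lambda>i\<in>I. inv_into A f (y i)) \<in> (\<Pi>\<^sub>E i\<in>I. B) \<rightarrow> (\<Pi>\<^sub>E i\<in>I. A)"
  proof
    fix y assume "y \<in> (\<Pi>\<^sub>E i\<in>I. B)"
    then show "(\<lambda>i\<in>I. inv_into A f (y i)) \<in> (\<Pi>\<^sub>E i\<in>I. A)"
      using bij_betw_apply[OF bij_betw_inv_into[OF assms]] by auto
  qed
  fix x assume x: "x \<in> (\<Pi>\<^sub>E i\<in>I. A)"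
  show "(\<lambda>i\<in>I. inv_into A f ((\<lambda>i\<in>I. f (x i)) i)) = x"
  proof
    fix i show "(\<lambda>i\<in>I. inv_into A f ((\<lambda>i\<in>I. f (x i)) i)) i = x i"
      using PiE_arb[OF x]
      by (cases "i \<in> I") (auto simp: PiE_mem[OF x] bij_betw_inv_into_left[OF assms])
  qed
next
  fix y assume y: "y \<in> (\<Pi>\<^sub>E i\<in>I. B)"
  show "(\<lambda>i\<in>I. f ((\<lambda>i\<in>I. inv_into A f (y i)) i)) = y"
  proof
    fix i show "(\<lambda>i\<in>I. f ((\<lambda>i\<in>I. inv_into A f (y i)) i)) i = y i"
      using PiE_arb[OF y]
      by (cases "i \<in> I") (auto simp: PiE_mem[OF y] bij_betw_inv_into_right[OF assms])
  qed
qed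

lemma mem_carrier_semidirect_wreath:
  "(g, a, s) \<in> carrier (semidirect (product_group {1..n} (\<lambda>_. G)) (wreath A n) psi) \<longleftrightarrow>
     g \<in> (\<Pi>\<^sub>E i\<in>{1..n}. carrier G) \<and> a \<in> (\<Pi>\<^sub>E i\<in>{1..n}. carrier A) \<and> s permutes {1..n}"
  by (simp add: semidirect_def wreath_def)

lemma ZG_module_semidirect_hom:
  assumes "ZG_module (semidirect G A phi) M rho" and "g \<in> carrier G" and "a \<in> carrier A"
  shows "rho (g, a) \<in> hom M M"
  using assms by (simp add: ZG_module_def semidirect_def)

lemma ZG_module_semidirect_mult:
  assumes "ZG_module (semidirect G A phi) M rho"
    and "g \<in> carrier G" "a \<in> carrier A" "h \<in> carrier G" "b \<in> carrier A" "m \<in> carrier M"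
  shows "rho (g \<otimes>\<^bsub>G\<^esub> phi a h, a \<otimes>\<^bsub>A\<^esub> b) m = rho (g, a) (rho (h, b) m)"
  using assms by (simp add: ZG_module_def semidirect_def)

lemma permutes_inv_in_image:
  "s permutes I \<Longrightarrow> i \<in> I \<Longrightarrow> Hilbert_Choice.inv s i \<in> I"
  by (simp add: permutes_in_image permutes_inv)

lemma wreath_module_action_hom:
  assumes M: "ZG_module (semidirect G A phi) M rho"
    and h: "(g, a, s) \<in> carrier (semidirect (product_group {1..n} (\<lambda>_. G)) (wreath A n) psi)"
  shows "wreath_module_action n rho (g, a, s)
           \<in> hom (product_group {1..n} (\<lambda>_. M)) (product_group {1..n} (\<lambda>_. M))"
proof -
  have g: "g \<in> (\<Pi>\<^sub>E i\<in>{1..n}. carrier G)" and a: "a \<in> (\<Pi>\<^sub>E i\<in>{1..n}. carrier A)"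
    and s: "s permutes {1..n}"
    using h unfolding mem_carrier_semidirect_wreath by blast+
  have hom: "rho (g i, a i) \<in> hom M M" if "i \<in> {1..n}" for i
    using ZG_module_semidirect_hom[OF M PiE_mem[OF g that] PiE_mem[OF a that]] .
  show ?thesis
  proof (rule homI)
    fix m assume m: "m \<in> carrier (product_group {1..n} (\<lambda>_. M))"
    have "rho (g i, a i) (m (Hilbert_Choice.inv s i)) \<in> carrier M" if "i \<in> {1..n}" for i
      using hom_in_carrier[OF hom[OF that]]
        PiE_mem[OF m[unfolded carrier_product_group] permutes_inv_in_image[OF s that]] .
    then show "wreath_module_action n rho (g, a, s) m \<in> carrier (product_group {1..n} (\<lambda>_. M))"
      unfolding wreath_module_action_def carrier_product_group by (simp add: restrict_PiE_iff)
  next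
    fix m m' assume m: "m \<in> carrier (product_group {1..n} (\<lambda>_. M))"
      and m': "m' \<in> carrier (product_group {1..n} (\<lambda>_. M))"
    have "rho (g i, a i) (m j \<otimes>\<^bsub>M\<^esub> m' j) = rho (g i, a i) (m j) \<otimes>\<^bsub>M\<^esub> rho (g i, a i) (m' j)"
      if "i \<in> {1..n}" "j \<in> {1..n}" for i j
      using hom_mult[OF hom[OF that(1)] PiE_mem[OF m[unfolded carrier_product_group] that(2)]
          PiE_mem[OF m'[unfolded carrier_product_group] that(2)]] .
    then show "wreath_module_action n rho (g, a, s) (m \<otimes>\<^bsub>product_group {1..n} (\<lambda>_. M)\<^esub> m') =
        wreath_module_action n rho (g, a, s) m \<otimes>\<^bsub>product_group {1..n} (\<lambda>_. M)\<^esub>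
        wreath_module_action n rho (g, a, s) m'"
      using permutes_inv_in_image[OF s] by (auto simp: wreath_module_action_def intro!: restrict_ext)
  qed
qed

lemma wreath_module_action_mult:
  assumes M: "ZG_module (semidirect G A phi) M rho"
    and h: "(g, a, s) \<in> carrier (semidirect (product_group {1..n} (\<lambda>_. G)) (wreath A n) (wreath_action n phi))"
    and k: "(h, b, t) \<in> carrier (semidirect (product_group {1..n} (\<lambda>_. G)) (wreath A n) (wreath_action n phi))"
    and m: "m \<in> carrier (product_group {1..n} (\<lambda>_. M))"
  shows "wreath_module_action n rho
           ((g, a, s) \<otimes>\<^bsub>semidirect (product_group {1..n} (\<lambda>_. G)) (wreath A n) (wreath_action n phi)\<^esub> (h, b, t)) m
         = wreath_module_action n rho (g, a, s) (wreath_module_action n rho (h, b, t) m)"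
proof -
  have g: "g \<in> (\<Pi>\<^sub>E i\<in>{1..n}. carrier G)" and a: "a \<in> (\<Pi>\<^sub>E i\<in>{1..n}. carrier A)"
    and s: "s permutes {1..n}"
    using h unfolding mem_carrier_semidirect_wreath by blast+
  have h': "h \<in> (\<Pi>\<^sub>E i\<in>{1..n}. carrier G)" and b: "b \<in> (\<Pi>\<^sub>E i\<in>{1..n}. carrier A)"
    and t: "t permutes {1..n}"
    using k unfolding mem_carrier_semidirect_wreath by blast+
  have inv_comp: "Hilbert_Choice.inv (s \<circ> t) = Hilbert_Choice.inv t \<circ> Hilbert_Choice.inv s"
    using s t by (simp add: o_inv_distrib permutes_bij)
  have "rho (g i \<otimes>\<^bsub>G\<^esub> phi (a i) (h j), a i \<otimes>\<^bsub>A\<^esub> b j) (m (Hilbert_Choice.inv t j))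
        = rho (g i, a i) (rho (h j, b j) (m (Hilbert_Choice.inv t j)))"
    if "i \<in> {1..n}" "j \<in> {1..n}" for i j
    by (rule ZG_module_semidirect_mult[OF M PiE_mem[OF g that(1)] PiE_mem[OF a that(1)]
          PiE_mem[OF h' that(2)] PiE_mem[OF b that(2)]
          PiE_mem[OF m[unfolded carrier_product_group] permutes_inv_in_image[OF t that(2)]]])
  then show ?thesis
    using permutes_inv_in_image[OF s]
    by (auto simp: wreath_module_action_def semidirect_def wreath_def wreath_action_def inv_comp
        intro!: restrict_ext)
qed

lemma ZG_module_wreath:
  assumes M: "ZG_module (semidirect G A phi) M rho"
  shows "ZG_module (semidirect (product_group {1..n} (\<lambda>_. G)) (wreath A n) (wreath_action n phi))
           (product_group {1..n} (\<lambda>_. M)) (wreath_module_action n rho)"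
    (is "ZG_module ?H ?M ?rho")
  unfolding ZG_module_def
proof (intro conjI ballI)
  show "comm_group ?M"
    using M by (intro comm_group_product_group) (simp add: ZG_module_def)
next
  fix x assume "x \<in> carrier ?H"
  then show "?rho x \<in> hom ?M ?M"
    using wreath_module_action_hom[OF M] by (cases x) blast
next
  fix m assume m: "m \<in> carrier ?M"
  have one: "rho (\<one>\<^bsub>G\<^esub>, \<one>\<^bsub>A\<^esub>) (m i) = m i" if "i \<in> {1..n}" for i
    using M PiE_mem[OF m[unfolded carrier_product_group] that]
    by (simp add: ZG_module_def semidirect_def)
  show "?rho \<one>\<^bsub>?H\<^esub> m = m"
  proof
    fix i
    show "?rho \<one>\<^bsub>?H\<^esub> m i = m i"
      using one PiE_arb[OF m[unfolded carrier_product_group]]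
      by (cases "i \<in> {1..n}") (auto simp: wreath_module_action_def semidirect_def wreath_def)
  qed
next
  fix x y m
  assume "x \<in> carrier ?H" and "y \<in> carrier ?H" and "m \<in> carrier ?M"
  then show "?rho (x \<otimes>\<^bsub>?H\<^esub> y) m = ?rho x (?rho y m)"
    using wreath_module_action_mult[OF M] by (cases x, cases y) blast
qed

lemma equivariant_IYB_structure_wreath:
  assumes "equivariant_IYB_structure G A phi M rho chi"
  shows "equivariant_IYB_structure (product_group {1..n} (\<lambda>_. G)) (wreath A n) (wreath_action n phi)
           (product_group {1..n} (\<lambda>_. M)) (wreath_module_action n rho) (\<lambda>g. \<lambda>i\<in>{1..n}. chi (g i))"
proof -
  have M: "ZG_module (semidirect G A phi) M rho"
    and bij: "bij_betw chi (carrier G) (carrier M)"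
    and cocycle: "\<And>g h. g \<in> carrier G \<Longrightarrow> h \<in> carrier G \<Longrightarrow>
                    chi (g \<otimes>\<^bsub>G\<^esub> h) = chi g \<otimes>\<^bsub>M\<^esub> rho (g, \<one>\<^bsub>A\<^esub>) (chi h)"
    and equivariant: "\<And>a g. a \<in> carrier A \<Longrightarrow> g \<in> carrier G \<Longrightarrow>
                        chi (phi a g) = rho (\<one>\<^bsub>G\<^esub>, a) (chi g)"
    using assms unfolding equivariant_IYB_structure_def by auto
  show ?thesis
    unfolding equivariant_IYB_structure_def
  proof (intro conjI ballI)
    show "ZG_module (semidirect (product_group {1..n} (\<lambda>_. G)) (wreath A n) (wreath_action n phi))
            (product_group {1..n} (\<lambda>_. M)) (wreath_module_action n rho)"
      using ZG_module_wreath[OF M] .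
    show "bij_betw (\<lambda>g. \<lambda>i\<in>{1..n}. chi (g i)) (carrier (product_group {1..n} (\<lambda>_. G)))
            (carrier (product_group {1..n} (\<lambda>_. M)))"
      unfolding carrier_product_group using bij_betw_PiE_pointwise[OF bij] .
  next
    fix g h
    assume g: "g \<in> carrier (product_group {1..n} (\<lambda>_. G))"
      and h: "h \<in> carrier (product_group {1..n} (\<lambda>_. G))"
    have "chi (g i \<otimes>\<^bsub>G\<^esub> h i) = chi (g i) \<otimes>\<^bsub>M\<^esub> rho (g i, \<one>\<^bsub>A\<^esub>) (chi (h i))" if "i \<in> {1..n}" for i
      using cocycle PiE_mem[OF g[unfolded carrier_product_group] that]
        PiE_mem[OF h[unfolded carrier_product_group] that] .
    then show "(\<lambda>i\<in>{1..n}. chi ((g \<otimes>\<^bsub>product_group {1..n} (\<lambda>_. G)\<^esub> h) i)) =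
        (\<lambda>i\<in>{1..n}. chi (g i)) \<otimes>\<^bsub>product_group {1..n} (\<lambda>_. M)\<^esub>
        wreath_module_action n rho (g, \<one>\<^bsub>wreath A n\<^esub>) (\<lambda>i\<in>{1..n}. chi (h i))"
      by (auto simp: wreath_module_action_def wreath_def intro!: restrict_ext)
  next
    fix a g
    assume a: "a \<in> carrier (wreath A n)" and g: "g \<in> carrier (product_group {1..n} (\<lambda>_. G))"
    obtain b s where a_eq: "a = (b, s)" and b: "b \<in> (\<Pi>\<^sub>E i\<in>{1..n}. carrier A)"
      and s: "s permutes {1..n}"
      using a by (cases a) (simp add: wreath_def)
    have "chi (phi (b i) (g (Hilbert_Choice.inv s i)))
          = rho (\<one>\<^bsub>G\<^esub>, b i) (chi (g (Hilbert_Choice.inv s i)))"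
      if "i \<in> {1..n}" for i
      using equivariant PiE_mem[OF b that]
        PiE_mem[OF g[unfolded carrier_product_group] permutes_inv_in_image[OF s that]] .
    then show "(\<lambda>i\<in>{1..n}. chi (wreath_action n phi a g i)) =
        wreath_module_action n rho (\<one>\<^bsub>product_group {1..n} (\<lambda>_. G)\<^esub>, a) (\<lambda>i\<in>{1..n}. chi (g i))"
      using permutes_inv_in_image[OF s]
      by (auto simp: a_eq wreath_module_action_def wreath_action_def intro!: restrict_ext)
  qed
qed

theorem mainTheorem3:
  fixes G :: "'g monoid" and A :: "'a monoid" and phi :: "'a \<Rightarrow> 'g \<Rightarrow> 'g" and n :: nat
  assumes "group G" and "finite (carrier G)" and "group A"
    and "aut_action A G phi"
    and "\<exists>(M :: 'm monoid) rho chi. equivariant_IYB_structure G A phi M rho chi"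
    and "n \<ge> 1"
  shows "\<exists>(M :: (nat \<Rightarrow> 'm) monoid) rho chi.
           equivariant_IYB_structure (product_group {1..n} (\<lambda>_. G)) (wreath A n)
             (wreath_action n phi) M rho chi"
  using assms(5) equivariant_IYB_structure_wreath by blast

end
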